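(* Let $F$ be a vector lattice endowed with a locally solid additive convergence $\eta$, let $A\subset F$, and let $E,H$ be ideals of $F$. Then: (i) $u_{A}\eta=u_{I(A)}\eta$, and this is the weakest locally solid additive convergence on $F$ which is stronger than $\eta$ on $[0_{F},|a|]$ for every $a\in A$; moreover $u_A\eta$ coincides with $\eta$ on $[0_F,|a|]$ for every $a\in A$. (ii) For a net $(f_\alpha)_{\alpha}\subset F_+$: $f_{\alpha}\xrightarrow{u_{A}\eta} 0_{F}$ iff $g_{\alpha}\xrightarrow{\eta} 0_{F}$ for every $a\in A$ and every net $(g_{\alpha})\subset[0_{F},|a|]$ (indexed by the same set) with $0_{F}\le g_{\alpha}\le f_{\alpha}$ for every $\alpha$. (iii) $u_{H}u_{E}\eta=u_{E\cap H}\eta$. In particular, $u_{E}u\eta=uu_{E}\eta=u_{E}u_{E}\eta=u_{E}\eta$. (iv) If $\eta$ is idempotent, then $u_{A}\eta=u_{\overline{I(A)}}\eta$. (v) If $\eta$ is idempotent and $h\in F_{+}$ is a topological unit, then for a net $(f_{\alpha})\subset F_{+}$ we have $f_{\alpha}\xrightarrow{u\eta} 0_{F}$ iff $h\wedge f_{\alpha}\xrightarrow{\eta} 0_{F}$.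
   Context: A convergence on a vector lattice $F$ is locally solid additive if addition and $f\mapsto -f$ are continuous and $|e_\alpha|\le|f_\alpha|$, $f_\alpha\to0_F$ imply $e_\alpha\to 0_F$. For $A\subset F$, $u_A\eta$ is the locally solid additive convergence on $F$ given by: $f_\alpha\xrightarrow{u_A\eta}f$ iff $|a|\wedge|f_\alpha-f|\xrightarrow{\eta}0_F$ for every $a\in A$; $u\eta:=u_F\eta$. $I(A)$ denotes the ideal generated by $A$. A convergence $\theta$ is stronger than $\eta$ on a set $S$ if whenever a net in $S$ $\theta$-converges to a point of $S$, it $\eta$-converges to that point; "coincides on $S$" means both directions. A set is closed if it contains the limits of all convergent nets in it; $\overline{G}$ (closure w.r.t. $\eta$) is the intersection of all closed sets containing $G$. $\eta$ is idempotent if for any nets $(f_{\alpha})_{\alpha\in A},(g_{\beta})_{\beta\in B}\subset F_{+}$ with $g_{\beta}\xrightarrow{\eta}0_{F}$ and $(f_{\alpha}-g_{\beta})^{+}\xrightarrow[\alpha]{\eta}0_{F}$ for every $\beta$, one has $f_{\alpha}\xrightarrow{\eta}0_{F}$. An element $h\in F_+$ is a topological unit if the principal ideal $F_h=\bigcup_{\lambda\ge0}\lambda[-h,h]$ satisfies $\overline{F_h}=F$. *)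

theory Defs
  imports Complex_Main
begin

text \<open>Nets are represented, as usual in Isabelle, by their tail filters:
a net (f_i) over an index filter D corresponds to the filter  filtermap f D.\<close>

type_synonym 'a convergence = "'a filter \<Rightarrow> 'a \<Rightarrow> bool"

definition vabs :: "'a::{ordered_real_vector,lattice} \<Rightarrow> 'a" where
  "vabs x = sup x (- x)"

definition pospart :: "'a::{ordered_real_vector,lattice} \<Rightarrow> 'a" where
  "pospart x = sup x 0"

text \<open>Axioms of a convergence: constant nets converge to their value, and
quasi-subnets (finer filters) of convergent nets converge to the same limit.\<close>
definition is_convergence :: "'a convergence \<Rightarrow> bool" where
  "is_convergence \<eta> \<longleftrightarrow>
     (\<forall>x. \<eta> (principal {x}) x) \<and> (\<forall>F G x. F \<le> G \<and> \<eta> G x \<longrightarrow> \<eta> F x)"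

definition locally_solid_additive :: "'a::{ordered_real_vector,lattice} convergence \<Rightarrow> bool" where
  "locally_solid_additive \<eta> \<longleftrightarrow> is_convergence \<eta> \<and>
     (\<forall>F G x y. \<eta> F x \<and> \<eta> G y \<longrightarrow> \<eta> (filtermap (\<lambda>(u, v). u + v) (F \<times>\<^sub>F G)) (x + y)) \<and>
     (\<forall>F x. \<eta> F x \<longrightarrow> \<eta> (filtermap uminus F) (- x)) \<and>
     (\<forall>D :: ('a \<times> 'a) filter.
        (\<forall>\<^sub>F p in D. vabs (fst p) \<le> vabs (snd p)) \<and> \<eta> (filtermap snd D) 0
          \<longrightarrow> \<eta> (filtermap fst D) 0)"

definition uconv :: "'a::{ordered_real_vector,lattice} set \<Rightarrow> 'a convergence \<Rightarrow> 'a convergence" where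
  "uconv A \<eta> F x \<longleftrightarrow> (\<forall>a\<in>A. \<eta> (filtermap (\<lambda>y. inf (vabs a) (vabs (y - x))) F) 0)"

definition is_ideal :: "'a::{ordered_real_vector,lattice} set \<Rightarrow> bool" where
  "is_ideal E \<longleftrightarrow> 0 \<in> E \<and> (\<forall>x\<in>E. \<forall>y\<in>E. x + y \<in> E) \<and> (\<forall>c. \<forall>x\<in>E. c *\<^sub>R x \<in> E) \<and>
     (\<forall>x\<in>E. \<forall>y. vabs y \<le> vabs x \<longrightarrow> y \<in> E)"

definition ideal_of :: "'a::{ordered_real_vector,lattice} set \<Rightarrow> 'a set" where
  "ideal_of A = \<Inter>{E. is_ideal E \<and> A \<subseteq> E}"

definition principal_ideal :: "'a::{ordered_real_vector,lattice} \<Rightarrow> 'a set" where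
  "principal_ideal h = {x. \<exists>c\<ge>0. \<exists>y. - h \<le> y \<and> y \<le> h \<and> x = c *\<^sub>R y}"

text \<open>theta is stronger than eta on S: every net in S that theta-converges to a
point of S eta-converges to it. (A net in S = a proper filter containing S.)\<close>
definition stronger_on :: "'a set \<Rightarrow> 'a convergence \<Rightarrow> 'a convergence \<Rightarrow> bool" where
  "stronger_on S \<theta> \<eta> \<longleftrightarrow>
     (\<forall>F x. F \<noteq> bot \<and> (\<forall>\<^sub>F y in F. y \<in> S) \<and> x \<in> S \<and> \<theta> F x \<longrightarrow> \<eta> F x)"

definition coincide_on :: "'a set \<Rightarrow> 'a convergence \<Rightarrow> 'a convergence \<Rightarrow> bool" where
  "coincide_on S \<theta> \<eta> \<longleftrightarrow> stronger_on S \<theta> \<eta> \<and> stronger_on S \<eta> \<theta>"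

definition conv_closed :: "'a convergence \<Rightarrow> 'a set \<Rightarrow> bool" where
  "conv_closed \<eta> C \<longleftrightarrow> (\<forall>F x. F \<noteq> bot \<and> (\<forall>\<^sub>F y in F. y \<in> C) \<and> \<eta> F x \<longrightarrow> x \<in> C)"

definition conv_closure :: "'a convergence \<Rightarrow> 'a set \<Rightarrow> 'a set" where
  "conv_closure \<eta> G = \<Inter>{C. conv_closed \<eta> C \<and> G \<subseteq> C}"

text \<open>Idempotency: nets (f_alpha), (g_beta) in F_+ (filters F, G, the latter
represented by its (nonempty-indexed) range S).\<close>
definition idempotent :: "'a::{ordered_real_vector,lattice} convergence \<Rightarrow> bool" where
  "idempotent \<eta> \<longleftrightarrow>
     (\<forall>F G S. (\<forall>\<^sub>F y in F. 0 \<le> y) \<and> G \<noteq> bot \<and> (\<forall>\<^sub>F z in G. z \<in> S) \<and> (\<forall>z\<in>S. 0 \<le> z) \<and>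
        \<eta> G 0 \<and> (\<forall>z\<in>S. \<eta> (filtermap (\<lambda>y. pospart (y - z)) F) 0) \<longrightarrow> \<eta> F 0)"

definition topological_unit :: "'a::{ordered_real_vector,lattice} convergence \<Rightarrow> 'a \<Rightarrow> bool" where
  "topological_unit \<eta> h \<longleftrightarrow> 0 \<le> h \<and> conv_closure \<eta> (principal_ideal h) = UNIV"

definition directed :: "('i \<Rightarrow> 'i \<Rightarrow> bool) \<Rightarrow> bool" where
  "directed le \<longleftrightarrow> reflp le \<and> transp le \<and> (\<forall>a b. \<exists>c. le a c \<and> le b c)"

definition tails :: "('i \<Rightarrow> 'i \<Rightarrow> bool) \<Rightarrow> 'i filter" where
  "tails le = (INF a. principal {b. le a b})"

end

theory Submission
  imports Defs "HOL-Library.Lattice_Algebras"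
begin

text \<open>The saturation of A, i.e. the set of all b such that every u_A eta-convergent net is
also u_{b} eta-convergent, is the largest set B with u_B eta = u_A eta. Solidity and additivity of
eta, through inf (u + v) w \<le> inf u w + inf v w, make it an ideal, whence u_A eta = u_I(A) eta. If
eta is idempotent it is eta-closed as well, because inf |b| |y - x| exceeds the eta-null net
inf |b'| |y - x| by at most |b' - b|; this is (iv), and (v) follows from F_h \<subseteq> I({h}).
Minimality in (i) holds since inf |a| |f_alpha - f| is a theta-null net in [0, |a|], and (iii)
since inf |e| |h| lies in E \<inter> H.\<close>

interpretation V: lattice_ab_group_add_abs vabs "(+)" "0::'a::{ordered_real_vector,lattice}" "(-)" uminus
  "(\<le>)" "(<)" inf sup
  by unfold_locales (simp add: vabs_def)

lemma inf_add_le_add_inf: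
  fixes u v w :: "'a::{ordered_real_vector,lattice}"
  assumes "0 \<le> u" "0 \<le> v" "0 \<le> w"
  shows "inf (u + v) w \<le> inf u w + inf v w"
proof -
  have distrib: "inf u w + inf v w = inf (inf (u + v) (u + w)) (inf (w + v) (w + w))"
    by (simp add: V.add_inf_distrib_left V.add_inf_distrib_right inf_aci)
  have "inf (u + v) w \<le> u + w" "inf (u + v) w \<le> w + v" "inf (u + v) w \<le> w + w"
    using assms by (meson add_increasing add_increasing2 inf.coboundedI2 order_refl)+
  then show ?thesis unfolding distrib by (simp add: le_infI le_infI1)
qed

lemma inf_vabs_add_le:
  fixes s t w :: "'a::{ordered_real_vector,lattice}"
  assumes "0 \<le> w"
  shows "inf (vabs (s + t)) w \<le> inf (vabs s) w + inf (vabs t) w"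
proof -
  have "inf (vabs (s + t)) w \<le> inf (vabs s + vabs t) w"
    using V.abs_triangle_ineq[of s t] by (simp add: inf.coboundedI1)
  also have "\<dots> \<le> inf (vabs s) w + inf (vabs t) w"
    by (rule inf_add_le_add_inf) (simp_all add: assms)
  finally show ?thesis .
qed

lemma inf_vabs_le_vabs_diff_add:
  fixes b b' w :: "'a::{ordered_real_vector,lattice}"
  assumes "0 \<le> w"
  shows "inf (vabs b) w \<le> vabs (b' - b) + inf (vabs b') w"
proof -
  have "inf (vabs b) w \<le> inf (vabs (b - b')) w + inf (vabs b') w"
    using inf_vabs_add_le[OF assms, of "b - b'" b'] by simp
  also have "\<dots> \<le> vabs (b' - b) + inf (vabs b') w"
    using V.abs_minus_commute[of b b'] by (simp add: add_right_mono)
  finally show ?thesis .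
qed

lemma vabs_scaleR_le:
  fixes x :: "'a::{ordered_real_vector,lattice}"
  shows "vabs (c *\<^sub>R x) \<le> \<bar>c\<bar> *\<^sub>R vabs x"
proof (cases "c \<ge> 0")
  case True
  then show ?thesis
    using scaleR_left_mono[OF V.abs_ge_self[of x] True]
      scaleR_left_mono[OF V.abs_ge_minus_self[of x] True] by (simp add: V.abs_leI)
next
  case False
  then have "0 \<le> - c" by simp
  from scaleR_left_mono[OF V.abs_ge_self[of x] this] scaleR_left_mono[OF V.abs_ge_minus_self[of x] this]
  show ?thesis using False by (simp add: V.abs_leI)
qed

lemma vabs_le_vabs_of_le:
  fixes x y :: "'a::{ordered_real_vector,lattice}"
  assumes "0 \<le> x" "x \<le> y"
  shows "vabs x \<le> vabs y"
  using assms by (simp add: V.abs_of_nonneg)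

lemma vabs_diff_le_of_interval:
  fixes x y b :: "'a::{ordered_real_vector,lattice}"
  assumes "x \<in> {0..b}" "y \<in> {0..b}"
  shows "vabs (y - x) \<le> b"
proof (rule V.abs_leI)
  show "y - x \<le> b" using assms by (auto intro: order_trans[of _ y] simp: diff_le_eq add_increasing2)
  show "- (y - x) \<le> b" using assms by (auto intro: order_trans[of _ x] simp: diff_le_eq add_increasing2)
qed

lemma vabs_pospart_inf_vabs_diff_le:
  fixes b b' w :: "'a::{ordered_real_vector,lattice}"
  assumes "0 \<le> w"
  shows "vabs (pospart (inf (vabs b) w - vabs (b' - b))) \<le> vabs (inf (vabs b') w)"
proof (rule vabs_le_vabs_of_le)
  have "inf (vabs b) w - vabs (b' - b) \<le> inf (vabs b') w"
    using inf_vabs_le_vabs_diff_add[OF assms, of b b'] by (metis diff_le_eq add.commute)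
  then show "pospart (inf (vabs b) w - vabs (b' - b)) \<le> inf (vabs b') w"
    using assms unfolding pospart_def by simp
qed (simp add: pospart_def)

lemma convergence_antimono: "is_convergence \<eta> \<Longrightarrow> F \<le> G \<Longrightarrow> \<eta> G x \<Longrightarrow> \<eta> F x"
  unfolding is_convergence_def by blast

lemma convergence_const:
  assumes "is_convergence \<eta>"
  shows "\<eta> (filtermap (\<lambda>_. c) F) c"
proof -
  have "filtermap (\<lambda>_. c) F \<le> principal {c}"
    by (auto simp: le_filter_def eventually_filtermap eventually_principal)
  then show ?thesis using assms unfolding is_convergence_def by blast
qed

lemma lsa_is_convergence: "locally_solid_additive \<eta> \<Longrightarrow> is_convergence \<eta>"
  by (simp add: locally_solid_additive_def)

lemma lsa_add:
  fixes \<eta> :: "'a::{ordered_real_vector,lattice} convergence"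
  assumes lsa: "locally_solid_additive \<eta>" and "\<eta> (filtermap f F) x" "\<eta> (filtermap g F) y"
  shows "\<eta> (filtermap (\<lambda>z. f z + g z) F) (x + y)"
proof -
  have "filtermap (\<lambda>z. f z + g z) F = filtermap (\<lambda>(u, v). u + v) (filtermap (\<lambda>z. (f z, g z)) F)"
    by (simp add: filtermap_filtermap)
  also have "\<dots> \<le> filtermap (\<lambda>(u, v). u + v) (filtermap f F \<times>\<^sub>F filtermap g F)"
    by (intro filtermap_mono filtermap_Pair)
  finally show ?thesis
    using assms convergence_antimono[OF lsa_is_convergence[OF lsa]]
    unfolding locally_solid_additive_def by blast
qed

lemma lsa_solid:
  fixes \<eta> :: "'a::{ordered_real_vector,lattice} convergence"
  assumes lsa: "locally_solid_additive \<eta>"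
    and dominated: "\<forall>\<^sub>F z in F. vabs (f z) \<le> vabs (g z)" and "\<eta> (filtermap g F) 0"
  shows "\<eta> (filtermap f F) 0"
proof -
  define D where "D = filtermap (\<lambda>z. (f z, g z)) F"
  have "\<forall>\<^sub>F p in D. vabs (fst p) \<le> vabs (snd p)"
    using dominated by (simp add: D_def eventually_filtermap)
  moreover have "filtermap snd D = filtermap g F" "filtermap fst D = filtermap f F"
    by (simp_all add: D_def filtermap_filtermap)
  ultimately show ?thesis
    using assms unfolding locally_solid_additive_def by metis
qed

lemma lsa_shift_iff:
  fixes \<eta> :: "'a::{ordered_real_vector,lattice} convergence"
  assumes lsa: "locally_solid_additive \<eta>"
  shows "\<eta> F x \<longleftrightarrow> \<eta> (filtermap (\<lambda>z. z - x) F) 0"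
proof
  assume "\<eta> F x"
  then show "\<eta> (filtermap (\<lambda>z. z - x) F) 0"
    using lsa_add[OF lsa, of "\<lambda>z. z" F x "\<lambda>_. - x" "- x"]
    by (simp add: filtermap_ident convergence_const[OF lsa_is_convergence[OF lsa]])
next
  assume "\<eta> (filtermap (\<lambda>z. z - x) F) 0"
  then show "\<eta> F x"
    using lsa_add[OF lsa, of "\<lambda>z. z - x" F 0 "\<lambda>_. x" x]
    by (simp add: filtermap_ident convergence_const[OF lsa_is_convergence[OF lsa]])
qed

lemma is_ideal_UNIV: "is_ideal UNIV"
  by (simp add: is_ideal_def)

lemma subset_ideal_of: "A \<subseteq> ideal_of A"
  unfolding ideal_of_def by blast

lemma ideal_of_least: "is_ideal E \<Longrightarrow> A \<subseteq> E \<Longrightarrow> ideal_of A \<subseteq> E"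
  unfolding ideal_of_def by blast

lemma subset_conv_closure: "A \<subseteq> conv_closure \<eta> A"
  unfolding conv_closure_def by blast

lemma conv_closure_least: "conv_closed \<eta> C \<Longrightarrow> A \<subseteq> C \<Longrightarrow> conv_closure \<eta> A \<subseteq> C"
  unfolding conv_closure_def by blast

lemma conv_closure_mono: "A \<subseteq> B \<Longrightarrow> conv_closure \<eta> A \<subseteq> conv_closure \<eta> B"
  unfolding conv_closure_def by blast

lemma principal_ideal_subset_ideal:
  assumes "is_ideal E" "h \<in> E" "0 \<le> h"
  shows "principal_ideal h \<subseteq> E"
proof
  fix z assume "z \<in> principal_ideal h"
  then obtain c y where "- h \<le> y" "y \<le> h" and z: "z = c *\<^sub>R y"
    by (auto simp: principal_ideal_def)
  then have "vabs y \<le> vabs h"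
    using \<open>0 \<le> h\<close> by (simp add: V.abs_of_nonneg V.abs_leI minus_le_iff)
  then show "z \<in> E" using assms unfolding is_ideal_def z by blast
qed

lemma principal_ideal_subset_ideal_of: "0 \<le> h \<Longrightarrow> principal_ideal h \<subseteq> ideal_of {h}"
  unfolding ideal_of_def using principal_ideal_subset_ideal by blast

lemma idempotentD:
  assumes "idempotent \<eta>" "\<forall>\<^sub>F y in F. 0 \<le> y" "G \<noteq> bot" "\<forall>\<^sub>F z in G. z \<in> S" "\<forall>z\<in>S. 0 \<le> z"
    "\<eta> G 0" "\<forall>z\<in>S. \<eta> (filtermap (\<lambda>y. pospart (y - z)) F) 0"
  shows "\<eta> F 0"
  using assms unfolding idempotent_def by blast

lemma uconv_if_conv:
  fixes \<eta> :: "'a::{ordered_real_vector,lattice} convergence"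
  assumes lsa: "locally_solid_additive \<eta>" and "\<eta> F x"
  shows "uconv A \<eta> F x"
  unfolding uconv_def
proof
  fix a
  have "\<eta> (filtermap (\<lambda>z. z - x) F) 0" using assms lsa_shift_iff by blast
  then show "\<eta> (filtermap (\<lambda>y. inf (vabs a) (vabs (y - x))) F) 0"
    by (rule lsa_solid[OF lsa, rotated]) (simp add: V.abs_of_nonneg)
qed

lemma uconv_uminus: "uconv A \<eta> F x \<Longrightarrow> uconv A \<eta> (filtermap uminus F) (- x)"
  unfolding uconv_def by (simp add: filtermap_filtermap V.abs_minus_commute[of x] algebra_simps)

lemma uconv_is_convergence:
  assumes "is_convergence \<eta>"
  shows "is_convergence (uconv A \<eta>)"
  unfolding is_convergence_def
proof (intro conjI allI impI)
  show "uconv A \<eta> (principal {x}) x" for x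
    using assms unfolding uconv_def is_convergence_def by (simp add: filtermap_principal inf_absorb2)
  show "uconv A \<eta> F x" if "F \<le> G \<and> uconv A \<eta> G x" for F G x
    using that convergence_antimono[OF assms] filtermap_mono unfolding uconv_def by blast
qed

lemma uconv_nonneg_iff:
  assumes "\<forall>\<alpha>. 0 \<le> f \<alpha>"
  shows "uconv A \<eta> (filtermap f T) 0 \<longleftrightarrow> (\<forall>a\<in>A. \<eta> (filtermap (\<lambda>\<alpha>. inf (vabs a) (f \<alpha>)) T) 0)"
  using assms by (simp add: uconv_def filtermap_filtermap V.abs_of_nonneg)

lemma uconv_uconv_ideal:
  assumes E: "is_ideal E" and H: "is_ideal H"
  shows "uconv H (uconv E \<eta>) = uconv (E \<inter> H) \<eta>"
proof (intro ext)
  fix F x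
  have "uconv H (uconv E \<eta>) F x \<longleftrightarrow>
      (\<forall>h\<in>H. \<forall>e\<in>E. \<eta> (filtermap (\<lambda>y. inf (inf (vabs e) (vabs h)) (vabs (y - x))) F) 0)"
    by (simp add: uconv_def filtermap_filtermap V.abs_of_nonneg inf_assoc)
  also have "\<dots> \<longleftrightarrow> uconv (E \<inter> H) \<eta> F x"
  proof
    assume "\<forall>h\<in>H. \<forall>e\<in>E. \<eta> (filtermap (\<lambda>y. inf (inf (vabs e) (vabs h)) (vabs (y - x))) F) 0"
    then show "uconv (E \<inter> H) \<eta> F x" unfolding uconv_def by (metis IntE inf.idem)
  next
    assume u: "uconv (E \<inter> H) \<eta> F x"
    show "\<forall>h\<in>H. \<forall>e\<in>E. \<eta> (filtermap (\<lambda>y. inf (inf (vabs e) (vabs h)) (vabs (y - x))) F) 0"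
    proof (intro ballI)
      fix h e assume "h \<in> H" "e \<in> E"
      then have "inf (vabs e) (vabs h) \<in> E \<inter> H"
        using E H unfolding is_ideal_def by (auto simp: V.abs_of_nonneg)
      with u show "\<eta> (filtermap (\<lambda>y. inf (inf (vabs e) (vabs h)) (vabs (y - x))) F) 0"
        unfolding uconv_def by (metis V.abs_of_nonneg le_inf_iff V.abs_ge_zero)
    qed
  qed
  finally show "uconv H (uconv E \<eta>) F x = uconv (E \<inter> H) \<eta> F x" .
qed

definition uconv_saturation :: "'a::{ordered_real_vector,lattice} set \<Rightarrow> 'a convergence \<Rightarrow> 'a set" where
  "uconv_saturation A \<eta> = {b. \<forall>F x. uconv A \<eta> F x \<longrightarrow> uconv {b} \<eta> F x}"

lemma subset_uconv_saturation: "A \<subseteq> uconv_saturation A \<eta>"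
  unfolding uconv_saturation_def uconv_def by blast

lemma uconv_eq_if_subset_saturation:
  assumes "A \<subseteq> B" "B \<subseteq> uconv_saturation A \<eta>"
  shows "uconv A \<eta> = uconv B \<eta>"
  using assms unfolding uconv_saturation_def uconv_def by (auto simp: fun_eq_iff)

context
  fixes \<eta> :: "'a::{ordered_real_vector,lattice} convergence"
  assumes lsa: "locally_solid_additive \<eta>"
begin

lemma uconv_add:
  assumes F: "uconv A \<eta> F x" and G: "uconv A \<eta> G y"
  shows "uconv A \<eta> (filtermap (\<lambda>(u, v). u + v) (F \<times>\<^sub>F G)) (x + y)"
  unfolding uconv_def
proof
  fix a assume "a \<in> A"
  define p where "p = (\<lambda>u. inf (vabs a) (vabs (u - x)))"
  define q where "q = (\<lambda>v. inf (vabs a) (vabs (v - y)))"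
  have "\<eta> (filtermap p F) 0" "\<eta> (filtermap q G) 0"
    using F G \<open>a \<in> A\<close> by (auto simp: uconv_def p_def q_def)
  then have "\<eta> (filtermap (\<lambda>(u, v). u + v) (filtermap p F \<times>\<^sub>F filtermap q G)) (0 + 0)"
    using lsa unfolding locally_solid_additive_def by blast
  then have sum: "\<eta> (filtermap (\<lambda>(u, v). p u + q v) (F \<times>\<^sub>F G)) 0"
    by (simp add: prod_filtermap1 prod_filtermap2 filtermap_filtermap split_def)
  have "inf (vabs a) (vabs (u + v - (x + y))) \<le> p u + q v" for u v
    using inf_vabs_add_le[of "vabs a" "u - x" "v - y"]
    by (simp add: p_def q_def inf_commute algebra_simps)
  then have "vabs (inf (vabs a) (vabs (u + v - (x + y)))) \<le> vabs (p u + q v)" for u v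
    by (intro vabs_le_vabs_of_le) simp_all
  then have "\<eta> (filtermap (\<lambda>(u, v). inf (vabs a) (vabs (u + v - (x + y)))) (F \<times>\<^sub>F G)) 0"
    by (intro lsa_solid[OF lsa _ sum]) (simp add: split_def)
  then show "\<eta> (filtermap (\<lambda>z. inf (vabs a) (vabs (z - (x + y)))) (filtermap (\<lambda>(u, v). u + v) (F \<times>\<^sub>F G))) 0"
    by (simp add: filtermap_filtermap split_def)
qed

lemma uconv_solid:
  assumes dominated: "\<forall>\<^sub>F p in D. vabs (fst p) \<le> vabs (snd p)"
    and "uconv A \<eta> (filtermap snd D) 0"
  shows "uconv A \<eta> (filtermap fst D) 0"
  unfolding uconv_def
proof
  fix a assume "a \<in> A"
  then have "\<eta> (filtermap (\<lambda>p. inf (vabs a) (vabs (snd p))) D) 0"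
    using assms by (simp add: uconv_def filtermap_filtermap)
  then have "\<eta> (filtermap (\<lambda>p. inf (vabs a) (vabs (fst p))) D) 0"
    by (rule lsa_solid[OF lsa, rotated])
      (use dominated in \<open>auto elim!: eventually_mono simp: V.abs_of_nonneg inf.coboundedI2\<close>)
  then show "\<eta> (filtermap (\<lambda>y. inf (vabs a) (vabs (y - 0))) (filtermap fst D)) 0"
    by (simp add: filtermap_filtermap)
qed

lemma uconv_lsa: "locally_solid_additive (uconv A \<eta>)"
  unfolding locally_solid_additive_def
  using uconv_is_convergence[OF lsa_is_convergence[OF lsa]] uconv_add uconv_uminus uconv_solid
  by blast

lemma uconv_stronger_on:
  assumes "a \<in> A"
  shows "stronger_on {0..vabs a} (uconv A \<eta>) \<eta>"
  unfolding stronger_on_def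
proof (intro allI impI, elim conjE)
  fix F x
  assume in_interval: "\<forall>\<^sub>F y in F. y \<in> {0..vabs a}" and x: "x \<in> {0..vabs a}" and "uconv A \<eta> F x"
  then have "\<eta> (filtermap (\<lambda>y. inf (vabs a) (vabs (y - x))) F) 0"
    using assms by (simp add: uconv_def)
  moreover have "\<forall>\<^sub>F y in F. vabs (y - x) \<le> vabs (inf (vabs a) (vabs (y - x)))"
    using in_interval
    by (rule eventually_mono) (simp add: V.abs_of_nonneg inf_absorb2 vabs_diff_le_of_interval[OF x])
  ultimately have "\<eta> (filtermap (\<lambda>y. y - x) F) 0"
    by (rule lsa_solid[OF lsa, rotated])
  then show "\<eta> F x" using lsa_shift_iff[OF lsa] by blast
qed

lemma uconv_coincide_on:
  assumes "a \<in> A"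
  shows "coincide_on {0..vabs a} (uconv A \<eta>) \<eta>"
  using uconv_stronger_on[OF assms] uconv_if_conv[OF lsa]
  unfolding coincide_on_def stronger_on_def by blast

lemma uconv_weakest:
  assumes lsa_\<theta>: "locally_solid_additive \<theta>"
    and stronger: "\<forall>a\<in>A. stronger_on {0..vabs a} \<theta> \<eta>"
  shows "stronger_on UNIV \<theta> (uconv A \<eta>)"
  unfolding stronger_on_def uconv_def
proof (intro allI impI ballI, elim conjE)
  fix F x a assume "F \<noteq> bot" "\<theta> F x" "a \<in> A"
  define G where "G = filtermap (\<lambda>y. inf (vabs a) (vabs (y - x))) F"
  have "\<theta> G 0"
    using uconv_if_conv[OF lsa_\<theta> \<open>\<theta> F x\<close>, of "{a}"] by (simp add: uconv_def G_def)
  moreover have "G \<noteq> bot" "\<forall>\<^sub>F y in G. y \<in> {0..vabs a}"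
    using \<open>F \<noteq> bot\<close> by (simp_all add: G_def filtermap_bot_iff eventually_filtermap)
  moreover have "0 \<in> {0..vabs a}" by simp
  ultimately show "\<eta> G 0"
    using stronger \<open>a \<in> A\<close> unfolding stronger_on_def by blast
qed

lemma uconv_saturation_solid:
  assumes "b \<in> uconv_saturation A \<eta>" "vabs c \<le> vabs b"
  shows "c \<in> uconv_saturation A \<eta>"
  unfolding uconv_saturation_def
proof (intro CollectI allI impI)
  fix F x assume "uconv A \<eta> F x"
  then have "\<eta> (filtermap (\<lambda>y. inf (vabs b) (vabs (y - x))) F) 0"
    using assms(1) by (simp add: uconv_saturation_def uconv_def)
  then show "uconv {c} \<eta> F x"
    unfolding uconv_def
    by (simp, rule lsa_solid[OF lsa, rotated]) (simp add: V.abs_of_nonneg inf.coboundedI1[OF assms(2)])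
qed

lemma uconv_saturation_add:
  assumes "b \<in> uconv_saturation A \<eta>" "c \<in> uconv_saturation A \<eta>"
  shows "b + c \<in> uconv_saturation A \<eta>"
  unfolding uconv_saturation_def
proof (intro CollectI allI impI)
  fix F x assume "uconv A \<eta> F x"
  then have "\<eta> (filtermap (\<lambda>y. inf (vabs b) (vabs (y - x))) F) 0"
    "\<eta> (filtermap (\<lambda>y. inf (vabs c) (vabs (y - x))) F) 0"
    using assms by (simp_all add: uconv_saturation_def uconv_def)
  from lsa_add[OF lsa this]
  have "\<eta> (filtermap (\<lambda>y. inf (vabs b) (vabs (y - x)) + inf (vabs c) (vabs (y - x))) F) 0"
    by simp
  then show "uconv {b + c} \<eta> F x"
    unfolding uconv_def
    by (simp, rule lsa_solid[OF lsa, rotated]) (simp add: vabs_le_vabs_of_le inf_vabs_add_le)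
qed

lemma uconv_saturation_zero: "0 \<in> uconv_saturation A \<eta>"
  unfolding uconv_saturation_def uconv_def
  by (simp add: inf_absorb1 convergence_const[OF lsa_is_convergence[OF lsa]])

lemma uconv_saturation_scaleR:
  assumes b: "b \<in> uconv_saturation A \<eta>"
  shows "r *\<^sub>R b \<in> uconv_saturation A \<eta>"
proof -
  have multiple: "of_nat n *\<^sub>R vabs b \<in> uconv_saturation A \<eta>" for n
  proof (induction n)
    case 0
    then show ?case using uconv_saturation_zero by simp
  next
    case (Suc n)
    have "vabs b \<in> uconv_saturation A \<eta>" using uconv_saturation_solid[OF b] by simp
    with Suc show ?case using uconv_saturation_add by (simp add: algebra_simps)
  qed
  obtain n :: nat where "\<bar>r\<bar> \<le> of_nat n" using real_arch_simple by blast
  then have "vabs (r *\<^sub>R b) \<le> of_nat n *\<^sub>R vabs b"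
    using vabs_scaleR_le[of r b] scaleR_right_mono[of "\<bar>r\<bar>" "of_nat n" "vabs b"] by simp
  also have "\<dots> = vabs (of_nat n *\<^sub>R vabs b)"
    by (rule V.abs_of_nonneg[symmetric]) (simp add: scaleR_nonneg_nonneg)
  finally show ?thesis using uconv_saturation_solid[OF multiple] by blast
qed

lemma is_ideal_uconv_saturation: "is_ideal (uconv_saturation A \<eta>)"
  unfolding is_ideal_def
  using uconv_saturation_zero uconv_saturation_add uconv_saturation_scaleR uconv_saturation_solid
  by blast

lemma uconv_ideal_of: "uconv A \<eta> = uconv (ideal_of A) \<eta>"
  by (intro uconv_eq_if_subset_saturation subset_ideal_of ideal_of_least
      is_ideal_uconv_saturation subset_uconv_saturation)

lemma uconv_saturation_pospart_conv:
  assumes "b' \<in> uconv_saturation A \<eta>" "uconv A \<eta> F x"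
  shows "\<eta> (filtermap (\<lambda>y. pospart (inf (vabs b) (vabs (y - x)) - vabs (b' - b))) F) 0"
proof -
  have "uconv {b'} \<eta> F x"
    using assms unfolding uconv_saturation_def by blast
  then have "\<eta> (filtermap (\<lambda>y. inf (vabs b') (vabs (y - x))) F) 0"
    by (simp add: uconv_def)
  then show ?thesis
    by (rule lsa_solid[OF lsa always_eventually, rotated]) (blast intro: vabs_pospart_inf_vabs_diff_le V.abs_ge_zero)
qed

lemma conv_closed_uconv_saturation:
  assumes idem: "idempotent \<eta>"
  shows "conv_closed \<eta> (uconv_saturation A \<eta>)"
  unfolding conv_closed_def
proof (intro allI impI, elim conjE)
  fix B b
  assume "B \<noteq> bot" and in_saturation: "\<forall>\<^sub>F b' in B. b' \<in> uconv_saturation A \<eta>" and "\<eta> B b"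
  show "b \<in> uconv_saturation A \<eta>"
    unfolding uconv_saturation_def
  proof (intro CollectI allI impI)
    fix F x assume u: "uconv A \<eta> F x"
    define G where "G = filtermap (\<lambda>b'. vabs (b' - b)) B"
    define S where "S = (\<lambda>b'. vabs (b' - b)) ` uconv_saturation A \<eta>"
    have "\<eta> (filtermap (\<lambda>b'. b' - b) B) 0"
      using \<open>\<eta> B b\<close> lsa_shift_iff[OF lsa] by blast
    then have G_conv: "\<eta> G 0"
      unfolding G_def by (rule lsa_solid[OF lsa, rotated]) simp
    have G_proper: "G \<noteq> bot" and G_in_S: "\<forall>\<^sub>F z in G. z \<in> S"
      using \<open>B \<noteq> bot\<close> in_saturation
      by (auto simp: G_def S_def filtermap_bot_iff eventually_filtermap elim: eventually_mono)
    have pospart_conv: "\<forall>z\<in>S. \<eta> (filtermap (\<lambda>y. pospart (y - z)) (filtermap (\<lambda>y. inf (vabs b) (vabs (y - x))) F)) 0"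
      using uconv_saturation_pospart_conv[OF _ u] by (auto simp: S_def filtermap_filtermap)
    have "\<eta> (filtermap (\<lambda>y. inf (vabs b) (vabs (y - x))) F) 0"
      by (rule idempotentD[OF idem _ G_proper G_in_S _ G_conv pospart_conv])
        (auto simp: S_def eventually_filtermap)
    then show "uconv {b} \<eta> F x" by (simp add: uconv_def)
  qed
qed

lemma uconv_conv_closure_ideal_of:
  assumes "idempotent \<eta>"
  shows "uconv A \<eta> = uconv (conv_closure \<eta> (ideal_of A)) \<eta>"
proof (rule uconv_eq_if_subset_saturation)
  show "A \<subseteq> conv_closure \<eta> (ideal_of A)"
    using subset_ideal_of[of A] subset_conv_closure[of "ideal_of A" \<eta>] by (rule order_trans)
  have "ideal_of A \<subseteq> uconv_saturation A \<eta>"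
    by (rule ideal_of_least[OF is_ideal_uconv_saturation subset_uconv_saturation])
  then show "conv_closure \<eta> (ideal_of A) \<subseteq> uconv_saturation A \<eta>"
    by (rule conv_closure_least[OF conv_closed_uconv_saturation[OF assms]])
qed

lemma uconv_nonneg_net_iff:
  assumes f: "\<forall>\<alpha>. 0 \<le> f \<alpha>"
  shows "uconv A \<eta> (filtermap f T) 0 \<longleftrightarrow>
    (\<forall>a\<in>A. \<forall>g. (\<forall>\<alpha>. g \<alpha> \<in> {0..vabs a} \<and> 0 \<le> g \<alpha> \<and> g \<alpha> \<le> f \<alpha>) \<longrightarrow> \<eta> (filtermap g T) 0)"
  unfolding uconv_nonneg_iff[OF f]
proof (intro iffI ballI allI impI)
  fix a g
  assume "\<forall>a\<in>A. \<eta> (filtermap (\<lambda>\<alpha>. inf (vabs a) (f \<alpha>)) T) 0" "a \<in> A"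
    and g: "\<forall>\<alpha>. g \<alpha> \<in> {0..vabs a} \<and> 0 \<le> g \<alpha> \<and> g \<alpha> \<le> f \<alpha>"
  then have conv: "\<eta> (filtermap (\<lambda>\<alpha>. inf (vabs a) (f \<alpha>)) T) 0" by blast
  show "\<eta> (filtermap g T) 0"
    by (rule lsa_solid[OF lsa always_eventually conv]) (use f g in \<open>simp add: V.abs_of_nonneg\<close>)
next
  fix a assume "a \<in> A"
    and "\<forall>a\<in>A. \<forall>g. (\<forall>\<alpha>. g \<alpha> \<in> {0..vabs a} \<and> 0 \<le> g \<alpha> \<and> g \<alpha> \<le> f \<alpha>) \<longrightarrow> \<eta> (filtermap g T) 0"
  then show "\<eta> (filtermap (\<lambda>\<alpha>. inf (vabs a) (f \<alpha>)) T) 0"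
    using f by simp
qed

lemma uconv_UNIV_iff_topological_unit:
  assumes "idempotent \<eta>" "topological_unit \<eta> h" "\<forall>\<alpha>. 0 \<le> f \<alpha>"
  shows "uconv UNIV \<eta> (filtermap f T) 0 \<longleftrightarrow> \<eta> (filtermap (\<lambda>\<alpha>. inf h (f \<alpha>)) T) 0"
proof -
  have "0 \<le> h" and "conv_closure \<eta> (principal_ideal h) = UNIV"
    using assms(2) by (auto simp: topological_unit_def)
  then have "conv_closure \<eta> (ideal_of {h}) = UNIV"
    using conv_closure_mono[OF principal_ideal_subset_ideal_of] by blast
  then have "uconv UNIV \<eta> = uconv {h} \<eta>"
    using uconv_conv_closure_ideal_of[OF assms(1), of "{h}"] by simp
  then show ?thesis
    using uconv_nonneg_iff[OF assms(3)] \<open>0 \<le> h\<close> by (simp add: V.abs_of_nonneg)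
qed

end

theorem proposition3p1:
  fixes \<eta> :: "'a::{ordered_real_vector,lattice} convergence"
    and A E H :: "'a set"
  assumes lsa: "locally_solid_additive \<eta>"
    and E: "is_ideal E" and H: "is_ideal H"
  shows
    \<comment> \<open>(i)\<close>
    "(uconv A \<eta> = uconv (ideal_of A) \<eta>
      \<and> locally_solid_additive (uconv A \<eta>)
      \<and> (\<forall>a\<in>A. stronger_on {0..vabs a} (uconv A \<eta>) \<eta>)
      \<and> (\<forall>\<theta>. locally_solid_additive \<theta> \<and> (\<forall>a\<in>A. stronger_on {0..vabs a} \<theta> \<eta>)
              \<longrightarrow> stronger_on UNIV \<theta> (uconv A \<eta>))
      \<and> (\<forall>a\<in>A. coincide_on {0..vabs a} (uconv A \<eta>) \<eta>))
    \<and> \<comment> \<open>(ii)\<close>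
    (\<forall>(le :: 'i \<Rightarrow> 'i \<Rightarrow> bool) f. directed le \<and> (\<forall>\<alpha>. 0 \<le> f \<alpha>) \<longrightarrow>
       (uconv A \<eta> (filtermap f (tails le)) 0 \<longleftrightarrow>
        (\<forall>a\<in>A. \<forall>g. (\<forall>\<alpha>. g \<alpha> \<in> {0..vabs a} \<and> 0 \<le> g \<alpha> \<and> g \<alpha> \<le> f \<alpha>)
                 \<longrightarrow> \<eta> (filtermap g (tails le)) 0)))
    \<and> \<comment> \<open>(iii)\<close>
    (uconv H (uconv E \<eta>) = uconv (E \<inter> H) \<eta>
     \<and> uconv E (uconv UNIV \<eta>) = uconv E \<eta>
     \<and> uconv UNIV (uconv E \<eta>) = uconv E \<eta>
     \<and> uconv E (uconv E \<eta>) = uconv E \<eta>)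
    \<and> \<comment> \<open>(iv)\<close>
    (idempotent \<eta> \<longrightarrow> uconv A \<eta> = uconv (conv_closure \<eta> (ideal_of A)) \<eta>)
    \<and> \<comment> \<open>(v)\<close>
    (\<forall>h (le :: 'j \<Rightarrow> 'j \<Rightarrow> bool) f. idempotent \<eta> \<and> topological_unit \<eta> h \<and>
       directed le \<and> (\<forall>\<alpha>. 0 \<le> f \<alpha>) \<longrightarrow>
       (uconv UNIV \<eta> (filtermap f (tails le)) 0 \<longleftrightarrow> \<eta> (filtermap (\<lambda>\<alpha>. inf h (f \<alpha>)) (tails le)) 0))"
proof (intro conjI ballI allI impI)
  show "uconv A \<eta> = uconv (ideal_of A) \<eta>" by (rule uconv_ideal_of[OF lsa])
  show "locally_solid_additive (uconv A \<eta>)" by (rule uconv_lsa[OF lsa])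
  show "stronger_on {0..vabs a} (uconv A \<eta>) \<eta>" if "a \<in> A" for a
    using uconv_stronger_on[OF lsa that] .
  show "stronger_on UNIV \<theta> (uconv A \<eta>)"
    if "locally_solid_additive \<theta> \<and> (\<forall>a\<in>A. stronger_on {0..vabs a} \<theta> \<eta>)" for \<theta>
    by (rule uconv_weakest[OF lsa]) (use that in blast)+
  show "coincide_on {0..vabs a} (uconv A \<eta>) \<eta>" if "a \<in> A" for a
    using uconv_coincide_on[OF lsa that] .
  \<comment> \<open>(ii) and (v) hold for nets over any index filter.\<close>
  show "uconv A \<eta> (filtermap f (tails le)) 0 \<longleftrightarrow>
      (\<forall>a\<in>A. \<forall>g. (\<forall>\<alpha>. g \<alpha> \<in> {0..vabs a} \<and> 0 \<le> g \<alpha> \<and> g \<alpha> \<le> f \<alpha>) \<longrightarrow> \<eta> (filtermap g (tails le)) 0)"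
    if "directed le \<and> (\<forall>\<alpha>. 0 \<le> f \<alpha>)" for le :: "'i \<Rightarrow> 'i \<Rightarrow> bool" and f
    by (rule uconv_nonneg_net_iff[OF lsa]) (use that in blast)
  show "uconv H (uconv E \<eta>) = uconv (E \<inter> H) \<eta>" by (rule uconv_uconv_ideal[OF E H])
  show "uconv E (uconv UNIV \<eta>) = uconv E \<eta>" using uconv_uconv_ideal[OF is_ideal_UNIV E] by simp
  show "uconv UNIV (uconv E \<eta>) = uconv E \<eta>" using uconv_uconv_ideal[OF E is_ideal_UNIV] by simp
  show "uconv E (uconv E \<eta>) = uconv E \<eta>" using uconv_uconv_ideal[OF E E] by simp
  show "uconv A \<eta> = uconv (conv_closure \<eta> (ideal_of A)) \<eta>" if "idempotent \<eta>"
    by (rule uconv_conv_closure_ideal_of[OF lsa that])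
  show "uconv UNIV \<eta> (filtermap f (tails le)) 0 \<longleftrightarrow> \<eta> (filtermap (\<lambda>\<alpha>. inf h (f \<alpha>)) (tails le)) 0"
    if "idempotent \<eta> \<and> topological_unit \<eta> h \<and> directed le \<and> (\<forall>\<alpha>. 0 \<le> f \<alpha>)"
    for h and le :: "'j \<Rightarrow> 'j \<Rightarrow> bool" and f
    by (rule uconv_UNIV_iff_topological_unit[OF lsa]) (use that in blast)+
qed

end
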